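(* Let $F:\mathbb{R}^d\to\mathbb{R}^d$ be $L$-Lipschitz, $G:\mathbb{R}^d\rightrightarrows\mathbb{R}^d$ maximally monotone, the solution set of $0\in F(x)+G(x)$ nonempty, and $F+G$ maximally $\rho$-cohypomonotone with $\rho>0$. Let $\eta>\rho$, $\alpha=1-\frac\rho\eta$, $\beta_k=\frac1{k+2}$, $x_0\in\mathbb{R}^d$, and let $x^\star$ be a solution. Suppose the sequence $(x_k)$ satisfies $x_{k+1}=\beta_kx_0+(1-\beta_k)\big((1-\alpha)x_k+\alpha\widetilde J_k\big)$ for $k\ge0$, where the points $\widetilde J_k\in\mathbb{R}^d$ satisfy $\|J_{\eta(F+G)}(x_k)-\widetilde J_k\|\le\varepsilon_k$ for some $\varepsilon_k>0$. Let $R=\mathrm{Id}-J_{\eta(F+G)}$. Then for any $K\ge1$, $$\frac{K(K+1)}{4}\|R(x_K)\|^2-\frac{K+1}{K\alpha^2}\|x^\star-x_0\|^2\le\sum_{k=0}^{K-1}\left(\frac{(k+1)(k+2)\varepsilon_k^2}{2}+(k+1)\|R(x_k)\|\varepsilon_k\right),$$ and $\|x_k-x^\star\|\le\|x_0-x^\star\|+\frac{\alpha}{k+1}\sum_{i=0}^{k-1}(i+1)\varepsilon_i$.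
   Context: For an operator $A$, $J_A=(\mathrm{Id}+A)^{-1}$ is its resolvent. $F+G$ is $\rho$-cohypomonotone if $\langle u-v,x-y\rangle\ge-\rho\|u-v\|^2$ for all $(x,u),(y,v)$ in its graph; maximal means its graph is not strictly contained in the graph of another $\rho$-cohypomonotone operator. *)

theory Defs
  imports "HOL-Analysis.Analysis"
begin

text \<open>Set-valued operators on a real inner product space are modelled as
  functions 'a => 'a set (x maps to A x; the graph is the set of (x,u) with u in A x).\<close>

definition monotone_op :: "('a::real_inner \<Rightarrow> 'a set) \<Rightarrow> bool" where
  "monotone_op A \<longleftrightarrow>
     (\<forall>x y u v. u \<in> A x \<longrightarrow> v \<in> A y \<longrightarrow> inner (u - v) (x - y) \<ge> 0)"

definition maximal_monotone_op :: "('a::real_inner \<Rightarrow> 'a set) \<Rightarrow> bool" where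
  "maximal_monotone_op A \<longleftrightarrow> monotone_op A \<and>
     (\<forall>B. monotone_op B \<and> (\<forall>x. A x \<subseteq> B x) \<longrightarrow> B = A)"

definition cohypomonotone_op :: "real \<Rightarrow> ('a::real_inner \<Rightarrow> 'a set) \<Rightarrow> bool" where
  "cohypomonotone_op \<rho> A \<longleftrightarrow>
     (\<forall>x y u v. u \<in> A x \<longrightarrow> v \<in> A y \<longrightarrow>
        inner (u - v) (x - y) \<ge> - \<rho> * (norm (u - v))\<^sup>2)"

definition maximal_cohypomonotone_op :: "real \<Rightarrow> ('a::real_inner \<Rightarrow> 'a set) \<Rightarrow> bool" where
  "maximal_cohypomonotone_op \<rho> A \<longleftrightarrow> cohypomonotone_op \<rho> A \<and>
     (\<forall>B. cohypomonotone_op \<rho> B \<and> (\<forall>x. A x \<subseteq> B x) \<longrightarrow> B = A)"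

definition sum_op :: "('a::real_vector \<Rightarrow> 'a) \<Rightarrow> ('a \<Rightarrow> 'a set) \<Rightarrow> 'a \<Rightarrow> 'a set" where
  "sum_op F G x = (\<lambda>u. F x + u) ` G x"

definition scale_op :: "real \<Rightarrow> ('a::real_vector \<Rightarrow> 'a set) \<Rightarrow> 'a \<Rightarrow> 'a set" where
  "scale_op c A x = (\<lambda>u. c *\<^sub>R u) ` A x"

text \<open>Resolvent J_A = (Id + A)^{-1}, evaluated at x: the (unique, when it exists)
  point y with x in y + A y.\<close>
definition resolvent :: "('a::real_vector \<Rightarrow> 'a set) \<Rightarrow> 'a \<Rightarrow> 'a" where
  "resolvent A x = (THE y. x - y \<in> A y)"

end

theory Submission
  imports Defs
begin

(* The residual R = Id - J of the resolvent J = J_{eta (F + G)} is (1 - rho/eta)-cocoercive and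
   vanishes at xstar; nothing else about F and G is used.  J is single-valued because F + G is
   rho-cohypomonotone and eta > rho, and it is defined everywhere by Minty's theorem, applied to the
   image of the graph of F + G under (y, u) |-> ((eta - rho) u, y + rho u - z), which is maximal
   monotone.  Minty's theorem in finite dimension follows from the Debrunner-Flor lemma (Brouwer's
   fixed point theorem on a convex hull) and compactness of balls.

   The scheme is Halpern's iteration for Id - alpha R with errors alpha (Jt k - J (x k)).  The
   Lyapunov function alpha^2 k (k+1)/2 |R x_k|^2 + alpha (k+1) <R x_k, x_k - x_0> grows in step k by
   at most alpha^2 times the k-th summand of the error sum, and at k = K it is at least
   alpha^2 K (K+1)/4 |R x_K|^2 - (K+1)/K |xstar - x_0|^2 by cocoercivity at xstar and Young's
   inequality.  The distance bound holds because Id - alpha R is nonexpansive. *)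

definition monotone_graph :: "('a::real_inner \<times> 'a) set \<Rightarrow> bool" where
  "monotone_graph S \<longleftrightarrow> (\<forall>p\<in>S. \<forall>q\<in>S. 0 \<le> inner (snd p - snd q) (fst p - fst q))"

lemma convex_combination_monotone_gap_nonpos:
  fixes P :: "('a::real_inner \<times> 'a) set" and \<beta> :: "'a \<times> 'a \<Rightarrow> real"
  assumes mono: "monotone_graph P" and nonneg: "\<And>p. p \<in> P \<Longrightarrow> 0 \<le> \<beta> p"
    and sum1: "sum \<beta> P = 1" and x: "x = (\<Sum>p\<in>P. \<beta> p *\<^sub>R fst p)"
  shows "(\<Sum>p\<in>P. \<beta> p * inner (x + snd p) (x - fst p)) \<le> 0"
proof -
  define T where "T = (\<Sum>p\<in>P. \<Sum>q\<in>P. \<beta> p * \<beta> q * inner (snd p) (fst q - fst p))"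
  have x_diff: "x - fst p = (\<Sum>q\<in>P. \<beta> q *\<^sub>R (fst q - fst p))" for p :: "'a \<times> 'a"
    using sum1 by (simp add: x scaleR_diff_right sum_subtractf flip: scaleR_sum_left)
  have "(\<Sum>p\<in>P. \<beta> p * inner x (x - fst p)) = inner x (x - (\<Sum>p\<in>P. \<beta> p *\<^sub>R fst p))"
    using sum1 by (simp add: inner_diff_right inner_sum_right right_diff_distrib sum_subtractf
        flip: sum_distrib_right)
  then have gap: "(\<Sum>p\<in>P. \<beta> p * inner (x + snd p) (x - fst p)) = T"
    by (simp add: x_diff T_def inner_add_left distrib_left sum.distrib inner_sum_right
        sum_distrib_left mult.assoc flip: x)
  have "T = (\<Sum>p\<in>P. \<Sum>q\<in>P. \<beta> q * \<beta> p * inner (snd q) (fst p - fst q))"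
    unfolding T_def by (rule sum.swap)
  then have "2 * T = (\<Sum>p\<in>P. \<Sum>q\<in>P. \<beta> p * \<beta> q * inner (snd p) (fst q - fst p)
      + \<beta> q * \<beta> p * inner (snd q) (fst p - fst q))"
    by (simp add: T_def sum.distrib)
  also have "\<dots> = (\<Sum>p\<in>P. \<Sum>q\<in>P. - (\<beta> p * \<beta> q * inner (snd p - snd q) (fst p - fst q)))"
    by (intro sum.cong refl) (simp add: algebra_simps)
  also have "\<dots> \<le> 0"
    using mono nonneg by (intro sum_nonpos) (simp add: monotone_graph_def)
  finally show ?thesis by (simp add: gap)
qed

lemma finite_monotone_graph_Debrunner_Flor:
  fixes P :: "('a::euclidean_space \<times> 'a) set"
  assumes fin: "finite P" and ne: "P \<noteq> {}" and mono: "monotone_graph P"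
  shows "\<exists>x. \<forall>p\<in>P. 0 \<le> inner (x + snd p) (fst p - x)"
proof (rule ccontr)
  define g where "g p x = inner (x + snd p) (x - fst p)" for p and x :: 'a
  define m where "m p x = max 0 (g p x)" for p x
  define D where "D x = (\<Sum>p\<in>P. m p x)" for x
  assume no_point: "\<not> ?thesis"
  have bad: "\<exists>p\<in>P. 0 < m p x" for x
  proof -
    from no_point obtain p where "p \<in> P" "inner (x + snd p) (fst p - x) < 0"
      by (metis not_le)
    then show ?thesis by (intro bexI[of _ p]) (auto simp: m_def g_def inner_diff_right)
  qed
  have D_pos: "0 < D x" for x
  proof -
    obtain p where "p \<in> P" "0 < m p x" using bad by blast
    moreover have "m p x \<le> D x"
      unfolding D_def using \<open>p \<in> P\<close> fin by (intro member_le_sum) (auto simp: m_def)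
    ultimately show ?thesis by simp
  qed
  (* Averaging the points fst p with the violations m p x as weights maps the convex hull into
     itself; at a Brouwer fixed point the weighted violation is both positive and nonpositive. *)
  define f where "f x = (\<Sum>p\<in>P. (m p x / D x) *\<^sub>R fst p)" for x
  define C where "C = convex hull (fst ` P)"
  have weights: "(\<Sum>p\<in>P. m p x / D x) = 1" for x
    using D_pos[of x] by (simp add: D_def flip: sum_divide_distrib)
  have weights_nonneg: "0 \<le> m p x / D x" for p x
    using D_pos[of x] by (simp add: m_def)
  have "continuous_on C (m p)" for p
    unfolding m_def g_def by (intro continuous_intros)
  then have "continuous_on C f"
    unfolding f_def D_def using D_pos
    by (intro continuous_intros) (auto simp: D_def less_le)
  moreover have "f \<in> C \<rightarrow> C"
    unfolding f_def C_def using weights weights_nonneg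
    by (intro funcsetI convex_sum[OF fin]) (auto simp: hull_inc)
  ultimately obtain x where fx: "f x = x"
    using brouwer[of C f] fin ne
    by (auto simp: C_def finite_imp_compact_convex_hull)
  have "(\<Sum>p\<in>P. m p x / D x * g p x) \<le> 0"
    unfolding g_def using mono weights fx
    by (intro convex_combination_monotone_gap_nonpos) (auto simp: weights_nonneg f_def)
  moreover have "(\<Sum>p\<in>P. m p x / D x * g p x) = (\<Sum>p\<in>P. (m p x)\<^sup>2) / D x"
    unfolding sum_divide_distrib
    by (rule sum.cong) (auto simp: m_def power2_eq_square max_def)
  moreover have "0 < (\<Sum>p\<in>P. (m p x)\<^sup>2)"
  proof -
    obtain p where "p \<in> P" "0 < m p x" using bad by blast
    moreover have "(m p x)\<^sup>2 \<le> (\<Sum>p\<in>P. (m p x)\<^sup>2)"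
      using \<open>p \<in> P\<close> fin by (intro member_le_sum) auto
    moreover have "0 < (m p x)\<^sup>2" using \<open>0 < m p x\<close> by simp
    ultimately show ?thesis by linarith
  qed
  ultimately show False using D_pos[of x] by (simp add: divide_le_0_iff)
qed

lemma inner_nonneg_set_eq_cball:
  fixes v y :: "'a::real_inner"
  shows "{x. 0 \<le> inner (x + v) (y - x)} = cball ((y - v) /\<^sub>R 2) (norm ((y + v) /\<^sub>R 2))"
proof -
  have "inner (x + v) (y - x) = (norm ((y + v) /\<^sub>R 2))\<^sup>2 - (dist x ((y - v) /\<^sub>R 2))\<^sup>2" for x
    unfolding dist_norm power2_norm_eq_inner by (simp add: inner_commute algebra_simps)
  moreover have "(dist x c)\<^sup>2 \<le> (norm ((y + v) /\<^sub>R 2))\<^sup>2 \<longleftrightarrow> dist c x \<le> norm ((y + v) /\<^sub>R 2)"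
    for c x :: 'a
    by (simp add: power2_le_iff_abs_le dist_commute)
  ultimately show ?thesis by auto
qed

(* Minty's theorem: (x, -x) \<in> S means 0 \<in> x + S x. *)
lemma Minty_maximal_monotone_graph:
  fixes S :: "('a::euclidean_space \<times> 'a) set"
  assumes ne: "S \<noteq> {}" and mono: "monotone_graph S"
    and maximal: "\<And>x u. (\<And>p. p \<in> S \<Longrightarrow> 0 \<le> inner (u - snd p) (x - fst p)) \<Longrightarrow> (x, u) \<in> S"
  shows "\<exists>x. (x, -x) \<in> S"
proof -
  define K where "K p = {x. 0 \<le> inner (x + snd p) (fst p - x)}" for p :: "'a \<times> 'a"
  have K_cball: "K p = cball ((fst p - snd p) /\<^sub>R 2) (norm ((fst p + snd p) /\<^sub>R 2))" for p
    unfolding K_def by (rule inner_nonneg_set_eq_cball)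
  obtain p0 where p0: "p0 \<in> S" using ne by blast
  have "K p0 \<inter> (\<Inter>p\<in>S. K p) \<noteq> {}"
  proof (rule compact_imp_fip_image)
    fix I assume I: "finite I" "I \<subseteq> S"
    have "monotone_graph (insert p0 I)"
      using mono I p0 by (auto simp: monotone_graph_def)
    then obtain x where "\<forall>p\<in>insert p0 I. 0 \<le> inner (x + snd p) (fst p - x)"
      using finite_monotone_graph_Debrunner_Flor[of "insert p0 I"] I by blast
    then show "K p0 \<inter> (\<Inter>p\<in>I. K p) \<noteq> {}" by (auto simp: K_def)
  qed (simp_all add: K_cball)
  then obtain x where "x \<in> K p0 \<inter> (\<Inter>p\<in>S. K p)" by blast
  then have x: "\<And>p. p \<in> S \<Longrightarrow> 0 \<le> inner (x + snd p) (fst p - x)"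
    by (simp add: K_def)
  have "(x, -x) \<in> S"
  proof (rule maximal)
    fix p assume "p \<in> S"
    have "- x - snd p = - (x + snd p)" "x - fst p = - (fst p - x)" by simp_all
    then show "0 \<le> inner (- x - snd p) (x - fst p)"
      using x[OF \<open>p \<in> S\<close>] by (simp only: inner_minus_left inner_minus_right minus_minus)
  qed
  then show ?thesis by blast
qed

lemma maximal_cohypomonotone_op_memI:
  assumes maximal: "maximal_cohypomonotone_op \<rho> A"
    and related: "\<And>y u. u \<in> A y \<Longrightarrow> - \<rho> * (norm (u0 - u))\<^sup>2 \<le> inner (u0 - u) (y0 - y)"
  shows "u0 \<in> A y0"
proof -
  define B where "B = A(y0 := insert u0 (A y0))"
  have co: "cohypomonotone_op \<rho> A"
    using maximal by (simp add: maximal_cohypomonotone_op_def)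
  have sym: "inner (u - v) (x - y) = inner (v - u) (y - x)" "norm (u - v) = norm (v - u)"
    for u v x y :: 'a
    by (simp_all add: inner_diff_left inner_diff_right norm_minus_commute)
  have "cohypomonotone_op \<rho> B"
    unfolding cohypomonotone_op_def
  proof (intro allI impI)
    fix x y u v assume "u \<in> B x" "v \<in> B y"
    then consider "u \<in> A x" "v \<in> A y" | "x = y0" "u = u0" "v \<in> A y"
      | "u \<in> A x" "y = y0" "v = u0" | "x = y0" "u = u0" "y = y0" "v = u0"
      by (auto simp: B_def split: if_splits)
    then show "- \<rho> * (norm (u - v))\<^sup>2 \<le> inner (u - v) (x - y)"
    proof cases
      case 1
      then show ?thesis using co by (simp add: cohypomonotone_op_def)
    next
      case 2
      then show ?thesis using related by simp
    next
      case 3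
      then show ?thesis using related[of u x] by (simp add: sym[of u0 u])
    qed simp
  qed
  moreover have "\<forall>x. A x \<subseteq> B x" by (auto simp: B_def)
  ultimately have "B = A" using maximal by (simp add: maximal_cohypomonotone_op_def)
  then show ?thesis by (metis B_def fun_upd_same insertI1)
qed

lemma maximal_cohypomonotone_resolvent_exists:
  fixes A :: "'a::euclidean_space \<Rightarrow> 'a set"
  assumes maximal: "maximal_cohypomonotone_op \<rho> A" and "\<rho> < \<eta>" and "u1 \<in> A y1"
  shows "\<exists>y. \<exists>u\<in>A y. z - y = \<eta> *\<^sub>R u"
proof -
  define c where "c = \<eta> - \<rho>"
  have c: "0 < c" using \<open>\<rho> < \<eta>\<close> by (simp add: c_def)
  define \<phi> where "\<phi> y u = (c *\<^sub>R u, y + \<rho> *\<^sub>R u - z)" for y u :: 'a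
  define S where "S = {\<phi> y u | y u. u \<in> A y}"
  have inner_\<phi>: "inner (snd (\<phi> y u) - snd (\<phi> y' u')) (fst (\<phi> y u) - fst (\<phi> y' u'))
      = c * (inner (u - u') (y - y') + \<rho> * (norm (u - u'))\<^sup>2)" for y u y' u'
    unfolding \<phi>_def power2_norm_eq_inner by (simp add: inner_commute algebra_simps)
  have "\<phi> y1 u1 \<in> S" using \<open>u1 \<in> A y1\<close> by (auto simp: S_def)
  then have "S \<noteq> {}" by blast
  moreover have "monotone_graph S"
    unfolding monotone_graph_def
  proof (intro ballI)
    fix p q assume "p \<in> S" "q \<in> S"
    then obtain y u y' u' where pq: "p = \<phi> y u" "q = \<phi> y' u'" and "u \<in> A y" "u' \<in> A y'"
      by (auto simp: S_def)
    then have "- \<rho> * (norm (u - u'))\<^sup>2 \<le> inner (u - u') (y - y')"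
      using maximal unfolding maximal_cohypomonotone_op_def cohypomonotone_op_def by blast
    then show "0 \<le> inner (snd p - snd q) (fst p - fst q)"
      unfolding pq inner_\<phi> using c by simp
  qed
  moreover have "(a, b) \<in> S" if related: "\<And>p. p \<in> S \<Longrightarrow> 0 \<le> inner (b - snd p) (a - fst p)" for a b
  proof -
    define u0 where "u0 = a /\<^sub>R c"
    define y0 where "y0 = b + z - \<rho> *\<^sub>R u0"
    have ab: "(a, b) = \<phi> y0 u0" using c by (simp add: \<phi>_def u0_def y0_def)
    have "u0 \<in> A y0"
    proof (rule maximal_cohypomonotone_op_memI[OF maximal])
      fix y u assume "u \<in> A y"
      then have "\<phi> y u \<in> S" by (auto simp: S_def)
      then have "0 \<le> inner (snd (\<phi> y0 u0) - snd (\<phi> y u)) (fst (\<phi> y0 u0) - fst (\<phi> y u))"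
        using related by (metis ab fst_conv snd_conv)
      then have "0 \<le> c * (inner (u0 - u) (y0 - y) + \<rho> * (norm (u0 - u))\<^sup>2)"
        by (simp only: inner_\<phi>)
      then show "- \<rho> * (norm (u0 - u))\<^sup>2 \<le> inner (u0 - u) (y0 - y)"
        using c by (simp add: zero_le_mult_iff)
    qed
    then show ?thesis unfolding ab S_def by blast
  qed
  ultimately obtain x where "(x, -x) \<in> S"
    using Minty_maximal_monotone_graph[of S] by blast
  then obtain y u where "u \<in> A y" "x = c *\<^sub>R u" "- x = y + \<rho> *\<^sub>R u - z"
    by (auto simp: S_def \<phi>_def)
  then have "z - y = \<eta> *\<^sub>R u" by (simp add: c_def algebra_simps)
  with \<open>u \<in> A y\<close> show ?thesis by blast
qed

lemma cohypomonotone_resolvent_unique: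
  fixes A :: "'a::real_inner \<Rightarrow> 'a set"
  assumes co: "cohypomonotone_op \<rho> A" and "\<rho> < \<eta>"
    and 1: "u1 \<in> A y1" "z - y1 = \<eta> *\<^sub>R u1"
    and 2: "u2 \<in> A y2" "z - y2 = \<eta> *\<^sub>R u2"
  shows "y1 = y2"
proof -
  have "y1 - y2 = - \<eta> *\<^sub>R (u1 - u2)"
    using 1 2 by (simp add: algebra_simps)
  then have "inner (u1 - u2) (y1 - y2) = - \<eta> * (norm (u1 - u2))\<^sup>2"
    by (simp add: power2_norm_eq_inner)
  moreover have "- \<rho> * (norm (u1 - u2))\<^sup>2 \<le> inner (u1 - u2) (y1 - y2)"
    using co 1 2 by (auto simp: cohypomonotone_op_def)
  ultimately have "(\<eta> - \<rho>) * (norm (u1 - u2))\<^sup>2 \<le> 0"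
    by (simp add: algebra_simps)
  then have "u1 = u2"
    using \<open>\<rho> < \<eta>\<close> by (simp add: mult_le_0_iff)
  then show ?thesis using 1 2 by (metis diff_add_cancel add_diff_cancel_left')
qed

lemma cohypomonotone_resolvent_eqI:
  fixes A :: "'a::real_inner \<Rightarrow> 'a set"
  assumes co: "cohypomonotone_op \<rho> A" and "\<rho> < \<eta>"
    and "u \<in> A y" "z - y = \<eta> *\<^sub>R u"
  shows "resolvent (scale_op \<eta> A) z = y"
  unfolding resolvent_def scale_op_def
  using assms cohypomonotone_resolvent_unique[OF co \<open>\<rho> < \<eta>\<close>]
  by (intro the_equality) auto

lemma maximal_cohypomonotone_resolvent_in_graph:
  fixes A :: "'a::euclidean_space \<Rightarrow> 'a set"
  assumes maximal: "maximal_cohypomonotone_op \<rho> A" and "\<rho> < \<eta>" and "u1 \<in> A y1"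
  shows "\<exists>u\<in>A (resolvent (scale_op \<eta> A) z). z - resolvent (scale_op \<eta> A) z = \<eta> *\<^sub>R u"
proof -
  obtain y u where "u \<in> A y" "z - y = \<eta> *\<^sub>R u"
    using maximal_cohypomonotone_resolvent_exists[OF assms] by blast
  moreover have "cohypomonotone_op \<rho> A"
    using maximal by (simp add: maximal_cohypomonotone_op_def)
  ultimately show ?thesis
    using cohypomonotone_resolvent_eqI \<open>\<rho> < \<eta>\<close> by metis
qed

definition cocoercive :: "real \<Rightarrow> ('a::real_inner \<Rightarrow> 'a) \<Rightarrow> bool" where
  "cocoercive \<alpha> R \<longleftrightarrow> (\<forall>z z'. \<alpha> * (norm (R z - R z'))\<^sup>2 \<le> inner (R z - R z') (z - z'))"

lemma maximal_cohypomonotone_resolvent_residual_cocoercive: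
  fixes A :: "'a::euclidean_space \<Rightarrow> 'a set"
  assumes maximal: "maximal_cohypomonotone_op \<rho> A" and "0 \<le> \<rho>" and "\<rho> < \<eta>" and "u1 \<in> A y1"
  shows "cocoercive (1 - \<rho> / \<eta>) (\<lambda>z. z - resolvent (scale_op \<eta> A) z)"
  unfolding cocoercive_def
proof (intro allI)
  fix z z'
  define J where "J = resolvent (scale_op \<eta> A)"
  obtain u u' where u: "u \<in> A (J z)" "z - J z = \<eta> *\<^sub>R u"
    and u': "u' \<in> A (J z')" "z' - J z' = \<eta> *\<^sub>R u'"
    using maximal_cohypomonotone_resolvent_in_graph[OF assms(1,3,4)] unfolding J_def by meson
  define d where "d = u - u'"
  have residual: "(z - J z) - (z' - J z') = \<eta> *\<^sub>R d"
    using u u' by (simp add: d_def algebra_simps)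
  have "- \<rho> * (norm d)\<^sup>2 \<le> inner d (J z - J z')"
    using maximal u u' by (auto simp: d_def maximal_cohypomonotone_op_def cohypomonotone_op_def)
  also have "J z - J z' = (z - z') - \<eta> *\<^sub>R d"
    using residual by (simp add: algebra_simps)
  finally have gap: "(\<eta> - \<rho>) * (norm d)\<^sup>2 \<le> inner d (z - z')"
    by (simp add: power2_norm_eq_inner algebra_simps)
  have "(1 - \<rho> / \<eta>) * (norm (\<eta> *\<^sub>R d))\<^sup>2 = \<eta> * ((\<eta> - \<rho>) * (norm d)\<^sup>2)"
    using assms(2,3) by (simp add: power2_eq_square field_simps)
  also have "\<dots> \<le> \<eta> * inner d (z - z')"
    using gap assms(2,3) by (intro mult_left_mono) auto
  also have "\<dots> = inner (\<eta> *\<^sub>R d) (z - z')" by simp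
  finally show "(1 - \<rho> / \<eta>) * (norm ((z - J z) - (z' - J z')))\<^sup>2
      \<le> inner ((z - J z) - (z' - J z')) (z - z')"
    unfolding residual .
qed

lemma cocoercive_nonexpansive_step:
  assumes "cocoercive \<alpha> R" and "0 \<le> \<alpha>"
  shows "norm ((z - \<alpha> *\<^sub>R R z) - (z' - \<alpha> *\<^sub>R R z')) \<le> norm (z - z')"
proof -
  define q where "q = R z - R z'"
  have "\<alpha> * (\<alpha> * (norm q)\<^sup>2) \<le> \<alpha> * inner q (z - z')"
    using assms by (intro mult_left_mono) (auto simp: cocoercive_def q_def)
  moreover have "(norm ((z - z') - \<alpha> *\<^sub>R q))\<^sup>2
      = (norm (z - z'))\<^sup>2 - 2 * \<alpha> * inner q (z - z') + \<alpha> * (\<alpha> * (norm q)\<^sup>2)"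
    unfolding power2_norm_eq_inner
    by (simp add: inner_commute algebra_simps)
  moreover have "0 \<le> \<alpha> * (\<alpha> * (norm q)\<^sup>2)"
    using assms by simp
  ultimately have "(norm ((z - z') - \<alpha> *\<^sub>R q))\<^sup>2 \<le> (norm (z - z'))\<^sup>2"
    by linarith
  then show ?thesis
    by (simp add: q_def power2_le_iff_abs_le algebra_simps)
qed

(* One step of the Lyapunov argument, with b = k, g = R x_k, h = R x_(k+1), d = x_k - x_0,
   y = x_(k+1) - x_0 and w = e_k.  The increase of the potential equals the error terms minus the
   cocoercivity gap and minus a square. *)
lemma halpern_potential_step:
  fixes g h w d y :: "'a::real_inner"
  assumes "0 \<le> a" and "0 \<le> b" and y: "y = ((b + 1) / (b + 2)) *\<^sub>R (d - a *\<^sub>R g + a *\<^sub>R w)"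
    and coco: "a * (norm (h - g))\<^sup>2 \<le> inner (h - g) (y - d)" and w: "norm w \<le> \<epsilon>"
  shows "a\<^sup>2 * ((b + 1) * (b + 2) / 2) * (norm h)\<^sup>2 + a * (b + 2) * inner h y
    \<le> a\<^sup>2 * (b * (b + 1) / 2) * (norm g)\<^sup>2 + a * (b + 1) * inner g d
      + a\<^sup>2 * ((b + 1) * (b + 2) * \<epsilon>\<^sup>2 / 2 + (b + 1) * norm g * \<epsilon>)"
proof -
  define Q where "Q = inner (h - g) (y - d) - a * (norm (h - g))\<^sup>2"
  have "a\<^sup>2 * ((b + 1) * (b + 2) / 2) * (norm h)\<^sup>2 + a * (b + 2) * inner h y
       - (a\<^sup>2 * (b * (b + 1) / 2) * (norm g)\<^sup>2 + a * (b + 1) * inner g d)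
     = - (a * (b + 1) * (b + 2) * Q) - a\<^sup>2 * (b + 1) * (b + 2) / 2 * (norm (h - g - w))\<^sup>2
       + a\<^sup>2 * (b + 1) * (b + 2) / 2 * (norm w)\<^sup>2 + a\<^sup>2 * (b + 1) * inner g w"
    using \<open>0 \<le> b\<close> unfolding Q_def y power2_norm_eq_inner
    by (simp add: inner_diff_left inner_diff_right inner_add_left inner_add_right inner_commute)
      (simp add: field_simps power2_eq_square)
  moreover have "0 \<le> a * (b + 1) * (b + 2) * Q"
    using assms by (simp add: Q_def)
  moreover have "0 \<le> a\<^sup>2 * (b + 1) * (b + 2) / 2 * (norm (h - g - w))\<^sup>2"
    using assms by simp
  moreover have "a\<^sup>2 * (b + 1) * (b + 2) / 2 * (norm w)\<^sup>2 \<le> a\<^sup>2 * (b + 1) * (b + 2) / 2 * \<epsilon>\<^sup>2"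
    using assms by (intro mult_left_mono power_mono) auto
  moreover have "a\<^sup>2 * (b + 1) * inner g w \<le> a\<^sup>2 * (b + 1) * (norm g * \<epsilon>)"
  proof -
    have "inner g w \<le> norm g * norm w" by (rule norm_cauchy_schwarz)
    also have "\<dots> \<le> norm g * \<epsilon>" using w by (simp add: mult_left_mono)
    finally show ?thesis using assms by (intro mult_left_mono) auto
  qed
  ultimately have "a\<^sup>2 * ((b + 1) * (b + 2) / 2) * (norm h)\<^sup>2 + a * (b + 2) * inner h y
    \<le> a\<^sup>2 * (b * (b + 1) / 2) * (norm g)\<^sup>2 + a * (b + 1) * inner g d
      + a\<^sup>2 * (b + 1) * (b + 2) / 2 * \<epsilon>\<^sup>2 + a\<^sup>2 * (b + 1) * (norm g * \<epsilon>)"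
    by linarith
  then show ?thesis
    by (simp add: algebra_simps)
qed

locale inexact_halpern =
  fixes R :: "'a::real_inner \<Rightarrow> 'a" and \<alpha> :: real and xstar :: 'a
    and x e :: "nat \<Rightarrow> 'a" and \<epsilon> :: "nat \<Rightarrow> real"
  assumes cocoercive: "cocoercive \<alpha> R" and alpha_pos: "0 < \<alpha>" and zero: "R xstar = 0"
    and iteration: "\<And>k. x (Suc k) = (1 / (real k + 2)) *\<^sub>R x 0
      + (1 - 1 / (real k + 2)) *\<^sub>R (x k - \<alpha> *\<^sub>R R (x k) + \<alpha> *\<^sub>R e k)"
    and error_bound: "\<And>k. norm (e k) \<le> \<epsilon> k"
begin

definition potential :: "nat \<Rightarrow> real" where
  "potential k = \<alpha>\<^sup>2 * (real k * (real k + 1) / 2) * (norm (R (x k)))\<^sup>2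
    + \<alpha> * (real k + 1) * inner (R (x k)) (x k - x 0)"

definition error_term :: "nat \<Rightarrow> real" where
  "error_term k = (real k + 1) * (real k + 2) * (\<epsilon> k)\<^sup>2 / 2 + (real k + 1) * norm (R (x k)) * \<epsilon> k"

lemma iteration_from_anchor:
  "x (Suc k) - x 0 = ((real k + 1) / (real k + 2)) *\<^sub>R (x k - x 0 - \<alpha> *\<^sub>R R (x k) + \<alpha> *\<^sub>R e k)"
proof -
  have "x (Suc k) - x 0
      = (1 - 1 / (real k + 2)) *\<^sub>R (x k - x 0 - \<alpha> *\<^sub>R R (x k) + \<alpha> *\<^sub>R e k)"
    by (subst iteration) (simp add: algebra_simps)
  also have "1 - 1 / (real k + 2) = (real k + 1) / (real k + 2)"
    by (simp add: field_simps)
  finally show ?thesis .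
qed

lemma potential_step: "potential (Suc k) \<le> potential k + \<alpha>\<^sup>2 * error_term k"
proof -
  have "\<alpha> * (norm (R (x (Suc k)) - R (x k)))\<^sup>2
      \<le> inner (R (x (Suc k)) - R (x k)) ((x (Suc k) - x 0) - (x k - x 0))"
    using cocoercive by (simp add: cocoercive_def)
  from halpern_potential_step[OF _ _ iteration_from_anchor this error_bound]
  show ?thesis
    using alpha_pos by (simp add: potential_def error_term_def add_ac)
qed

lemma potential_le_sum: "potential K \<le> \<alpha>\<^sup>2 * (\<Sum>k<K. error_term k)"
proof (induction K)
  case 0
  then show ?case by (simp add: potential_def)
next
  case (Suc K)
  then show ?case using potential_step[of K] by (simp add: distrib_left)
qed

lemma potential_lower_bound:
  assumes "1 \<le> K"
  shows "\<alpha>\<^sup>2 * (real K * (real K + 1) / 4) * (norm (R (x K)))\<^sup>2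
      - (real K + 1) / real K * (norm (xstar - x 0))\<^sup>2 \<le> potential K"
proof -
  define r where "r = norm (R (x K))"
  define D where "D = norm (xstar - x 0)"
  define k where "k = real K"
  have k: "1 \<le> k" using assms by (simp add: k_def)
  have "0 \<le> \<alpha> * r\<^sup>2" using alpha_pos by simp
  also have "\<alpha> * r\<^sup>2 \<le> inner (R (x K)) (x K - xstar)"
    using cocoercive zero unfolding cocoercive_def r_def by (metis diff_zero)
  finally have "0 \<le> inner (R (x K)) (x K - xstar)" .
  moreover have "- (r * D) \<le> inner (R (x K)) (xstar - x 0)"
    using norm_cauchy_schwarz[of "R (x K)" "x 0 - xstar"]
    by (simp add: r_def D_def norm_minus_commute inner_diff_right)
  ultimately have "- (r * D) \<le> inner (R (x K)) (x K - x 0)"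
    by (simp add: inner_diff_right)
  then have "\<alpha> * (k + 1) * (- (r * D)) \<le> \<alpha> * (k + 1) * inner (R (x K)) (x K - x 0)"
    using alpha_pos k by (intro mult_left_mono) auto
  moreover have "\<alpha> * (k + 1) * (r * D) \<le> \<alpha>\<^sup>2 * (k * (k + 1) / 4) * r\<^sup>2 + (k + 1) / k * D\<^sup>2"
  proof -
    have "k * (\<alpha>\<^sup>2 * (k * (k + 1) / 4) * r\<^sup>2 + (k + 1) / k * D\<^sup>2 - \<alpha> * (k + 1) * (r * D))
        = (k + 1) * (\<alpha> * k * r / 2 - D)\<^sup>2"
      using k by (simp add: field_simps power2_eq_square)
    also have "\<dots> \<ge> 0" using k by simp
    finally show ?thesis using k by (simp add: zero_le_mult_iff)
  qed
  ultimately show ?thesis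
    unfolding potential_def r_def[symmetric] D_def[symmetric] k_def[symmetric] by linarith
qed

lemma residual_bound:
  assumes "1 \<le> K"
  shows "real K * (real K + 1) / 4 * (norm (R (x K)))\<^sup>2
      - (real K + 1) / (real K * \<alpha>\<^sup>2) * (norm (xstar - x 0))\<^sup>2 \<le> (\<Sum>k<K. error_term k)"
proof -
  have "\<alpha>\<^sup>2 * (real K * (real K + 1) / 4 * (norm (R (x K)))\<^sup>2
      - (real K + 1) / (real K * \<alpha>\<^sup>2) * (norm (xstar - x 0))\<^sup>2)
    = \<alpha>\<^sup>2 * (real K * (real K + 1) / 4) * (norm (R (x K)))\<^sup>2
      - (real K + 1) / real K * (norm (xstar - x 0))\<^sup>2"
    using alpha_pos assms by (simp add: field_simps)
  also have "\<dots> \<le> \<alpha>\<^sup>2 * (\<Sum>k<K. error_term k)"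
    using potential_lower_bound[OF assms] potential_le_sum[of K] by linarith
  finally show ?thesis
    using alpha_pos by (simp add: mult_le_cancel_left)
qed

lemma distance_bound:
  "norm (x k - xstar) \<le> norm (x 0 - xstar) + \<alpha> / (real k + 1) * (\<Sum>i<k. (real i + 1) * \<epsilon> i)"
proof (induction k)
  case 0
  then show ?case by simp
next
  case (Suc k)
  define s where "s = 1 / (real k + 2)"
  define D where "D = norm (x 0 - xstar)"
  define S where "S = (\<Sum>i<k. (real i + 1) * \<epsilon> i)"
  have s: "0 \<le> s" "s \<le> 1" by (auto simp: s_def)
  have step: "norm (((x k - \<alpha> *\<^sub>R R (x k)) - (xstar - \<alpha> *\<^sub>R R xstar)) + \<alpha> *\<^sub>R e k)
      \<le> norm (x k - xstar) + \<alpha> * \<epsilon> k"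
  proof -
    have "norm (\<alpha> *\<^sub>R e k) \<le> \<alpha> * \<epsilon> k"
      using alpha_pos error_bound[of k] by (simp add: mult_left_mono)
    then show ?thesis
      using cocoercive_nonexpansive_step[OF cocoercive, of "x k" xstar] alpha_pos
        norm_triangle_ineq[of "(x k - \<alpha> *\<^sub>R R (x k)) - (xstar - \<alpha> *\<^sub>R R xstar)" "\<alpha> *\<^sub>R e k"]
      by linarith
  qed
  have "x (Suc k) - xstar = s *\<^sub>R (x 0 - xstar)
      + (1 - s) *\<^sub>R (((x k - \<alpha> *\<^sub>R R (x k)) - (xstar - \<alpha> *\<^sub>R R xstar)) + \<alpha> *\<^sub>R e k)"
    by (subst iteration) (simp add: s_def zero algebra_simps)
  also have "norm \<dots> \<le> s * D
      + (1 - s) * norm (((x k - \<alpha> *\<^sub>R R (x k)) - (xstar - \<alpha> *\<^sub>R R xstar)) + \<alpha> *\<^sub>R e k)"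
    using s by (intro order_trans[OF norm_triangle_ineq]) (simp add: D_def)
  also have "\<dots> \<le> s * D + (1 - s) * (norm (x k - xstar) + \<alpha> * \<epsilon> k)"
    using s step by (intro add_left_mono mult_left_mono) auto
  also have "\<dots> \<le> s * D + (1 - s) * (D + \<alpha> / (real k + 1) * S + \<alpha> * \<epsilon> k)"
    using Suc.IH s by (intro add_left_mono mult_left_mono) (auto simp: D_def S_def)
  also have "\<dots> = D + (1 - s) * (\<alpha> / (real k + 1) * S + \<alpha> * \<epsilon> k)"
    by (simp add: algebra_simps)
  also have "1 - s = (real k + 1) / (real k + 2)"
    by (simp add: s_def field_simps)
  also have "(real k + 1) / (real k + 2) * (\<alpha> / (real k + 1) * S + \<alpha> * \<epsilon> k)
      = \<alpha> / (real k + 2) * (S + (real k + 1) * \<epsilon> k)"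
  proof -
    have rescale: "c / d * (\<alpha> / c * S + \<alpha> * \<epsilon> k) = \<alpha> / d * (S + c * \<epsilon> k)"
      if "c \<noteq> 0" "d \<noteq> 0" for c d :: real
      using that by (simp add: field_simps)
    have "real k + 1 \<noteq> 0" "real k + 2 \<noteq> 0" by linarith+
    then show ?thesis by (rule rescale)
  qed
  finally show ?case
    by (simp add: D_def S_def add.commute)
qed

end

theorem lemma2p5:
  fixes F :: "'a::euclidean_space \<Rightarrow> 'a" and G :: "'a \<Rightarrow> 'a set"
    and L \<rho> \<eta> \<alpha> :: real and x Jt :: "nat \<Rightarrow> 'a" and \<epsilon> :: "nat \<Rightarrow> real"
    and xstar :: 'a
  assumes lip: "L-lipschitz_on UNIV F"
    and maxmon: "maximal_monotone_op G"
    and solset: "\<exists>z. 0 \<in> sum_op F G z"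
    and cohypo: "maximal_cohypomonotone_op \<rho> (sum_op F G)"
    and rho_pos: "\<rho> > 0"
    and eta: "\<eta> > \<rho>"
    and alpha: "\<alpha> = 1 - \<rho> / \<eta>"
    and sol: "0 \<in> sum_op F G xstar"
    and iter: "\<And>k. x (Suc k) = (1 / (real k + 2)) *\<^sub>R x 0
                 + (1 - 1 / (real k + 2)) *\<^sub>R ((1 - \<alpha>) *\<^sub>R x k + \<alpha> *\<^sub>R Jt k)"
    and inexact: "\<And>k. norm (resolvent (scale_op \<eta> (sum_op F G)) (x k) - Jt k) \<le> \<epsilon> k"
    and eps_pos: "\<And>k. \<epsilon> k > 0"
  shows "(\<forall>K\<ge>1.
            real K * (real K + 1) / 4 * (norm (x K - resolvent (scale_op \<eta> (sum_op F G)) (x K)))\<^sup>2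
            - (real K + 1) / (real K * \<alpha>\<^sup>2) * (norm (xstar - x 0))\<^sup>2
          \<le> (\<Sum>k<K. (real k + 1) * (real k + 2) * (\<epsilon> k)\<^sup>2 / 2
                 + (real k + 1) * norm (x k - resolvent (scale_op \<eta> (sum_op F G)) (x k)) * \<epsilon> k))
       \<and> (\<forall>k. norm (x k - xstar) \<le> norm (x 0 - xstar)
                 + \<alpha> / (real k + 1) * (\<Sum>i<k. (real i + 1) * \<epsilon> i))"
proof -
  define J where "J = resolvent (scale_op \<eta> (sum_op F G))"
  define R where "R z = z - J z" for z
  interpret inexact_halpern R \<alpha> xstar x "\<lambda>k. Jt k - J (x k)" \<epsilon>
  proof
    show "cocoercive \<alpha> R"
      unfolding R_def J_def alpha
      using maximal_cohypomonotone_resolvent_residual_cocoercive[OF cohypo _ eta sol] rho_pos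
      by simp
    show "0 < \<alpha>"
      using rho_pos eta by (simp add: alpha)
    have "J xstar = xstar"
      unfolding J_def using cohypo sol eta
      by (intro cohypomonotone_resolvent_eqI[of \<rho> _ _ 0]) (auto simp: maximal_cohypomonotone_op_def)
    then show "R xstar = 0"
      by (simp add: R_def)
    show "x (Suc k) = (1 / (real k + 2)) *\<^sub>R x 0
        + (1 - 1 / (real k + 2)) *\<^sub>R (x k - \<alpha> *\<^sub>R R (x k) + \<alpha> *\<^sub>R (Jt k - J (x k)))" for k
      using iter[of k] by (simp add: R_def algebra_simps)
    show "norm (Jt k - J (x k)) \<le> \<epsilon> k" for k
      using inexact[of k] by (simp add: J_def norm_minus_commute)
  qed
  show ?thesis
    using residual_bound distance_bound
    by (simp add: error_term_def R_def J_def)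
qed

end
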